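(* Let $n\ge3$ and for $i\in\mathbb Z/n\mathbb Z$ let $e_i=x_{i,i+1}\in\mathcal E_n$, where the vertices are labeled $0,1,\dots,n-1$ modulo $n$. Then in $\mathcal E_n$: $$R_1:=\sum_{i=0}^{n-1}e_{i-1}e_{i-2}\cdots e_{1}e_0\,e_{n-1}e_{n-2}\cdots e_{i+1}=0,\qquad R_{n-1}:=\sum_{i=0}^{n-1}e_{i+1}e_{i+2}\cdots e_{n-1}\,e_0e_1\cdots e_{i-1}=0,$$ where the $i$-th summand of $R_1$ is the product of all $e_j$ with $j\ne i$ in cyclically decreasing order of index starting from $e_{i-1}$ and ending with $e_{i+1}$, and the $i$-th summand of $R_{n-1}$ is the product of all $e_j$ with $j\neq i$ in cyclically increasing order starting from $e_{i+1}$ and ending with $e_{i-1}$.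
   Context: Let $n\ge 1$. The Fomin–Kirillov algebra $\mathcal E_n$ is the associative $\mathbb Q$-algebra with generators $x_{ij}$ for ordered pairs of distinct $i,j$ in an $n$-element index set (here $\{0,1,\dots,n-1\}$), subject to $x_{ij}=-x_{ji}$, $x_{ij}^2=0$, $x_{ij}x_{kl}=x_{kl}x_{ij}$ for distinct $i,j,k,l$, and $x_{ij}x_{jk}+x_{jk}x_{ki}+x_{ki}x_{ij}=0$ for distinct $i,j,k$. *)

theory Defs
  imports Complex_Main
begin

text \<open>Generators are pairs (i,j); a word is a list of generators; an element of the
  free algebra is a finitely supported function from words to rat (the
  coefficient of each word).  The Fomin-Kirillov algebra E_n is the quotient by
  the two-sided ideal FK_ideal n; an element is zero in E_n iff it lies in it.\<close>

type_synonym gen = "nat \<times> nat"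
type_synonym word = "gen list"
type_synonym ncpoly = "word \<Rightarrow> rat"

definition gens :: "nat \<Rightarrow> gen set" where
  "gens n = {(i, j). i < n \<and> j < n \<and> i \<noteq> j}"

definition monom :: "word \<Rightarrow> ncpoly" where
  "monom w = (\<lambda>v. if v = w then 1 else 0)"

definition padd :: "ncpoly \<Rightarrow> ncpoly \<Rightarrow> ncpoly" where
  "padd f g = (\<lambda>v. f v + g v)"

definition psmult :: "rat \<Rightarrow> ncpoly \<Rightarrow> ncpoly" where
  "psmult c f = (\<lambda>v. c * f v)"

definition lmul :: "word \<Rightarrow> ncpoly \<Rightarrow> ncpoly" where
  "lmul u f = (\<lambda>v. if take (length u) v = u then f (drop (length u) v) else 0)"

definition rmul :: "ncpoly \<Rightarrow> word \<Rightarrow> ncpoly" where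
  "rmul f u = (\<lambda>v. if length u \<le> length v \<and> drop (length v - length u) v = u
                    then f (take (length v - length u) v) else 0)"

definition FK_relations :: "nat \<Rightarrow> ncpoly set" where
  "FK_relations n =
     {padd (monom [(i, j)]) (monom [(j, i)]) | i j. (i, j) \<in> gens n}
   \<union> {monom [(i, j), (i, j)] | i j. (i, j) \<in> gens n}
   \<union> {padd (monom [(i, j), (k, l)]) (psmult (-1) (monom [(k, l), (i, j)])) | i j k l.
        i < n \<and> j < n \<and> k < n \<and> l < n \<and> distinct [i, j, k, l]}
   \<union> {padd (padd (monom [(i, j), (j, k)]) (monom [(j, k), (k, i)])) (monom [(k, i), (i, j)])
        | i j k. i < n \<and> j < n \<and> k < n \<and> distinct [i, j, k]}"

inductive_set FK_ideal :: "nat \<Rightarrow> ncpoly set" for n where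
  rel: "r \<in> FK_relations n \<Longrightarrow> r \<in> FK_ideal n"
| zero: "(\<lambda>_. 0) \<in> FK_ideal n"
| add: "f \<in> FK_ideal n \<Longrightarrow> g \<in> FK_ideal n \<Longrightarrow> padd f g \<in> FK_ideal n"
| smult: "f \<in> FK_ideal n \<Longrightarrow> psmult c f \<in> FK_ideal n"
| lmul: "f \<in> FK_ideal n \<Longrightarrow> set u \<subseteq> gens n \<Longrightarrow> lmul u f \<in> FK_ideal n"
| rmul: "f \<in> FK_ideal n \<Longrightarrow> set u \<subseteq> gens n \<Longrightarrow> rmul f u \<in> FK_ideal n"

definition FK_zero :: "nat \<Rightarrow> ncpoly \<Rightarrow> bool" where
  "FK_zero n f \<longleftrightarrow> f \<in> FK_ideal n"

definition edge :: "nat \<Rightarrow> nat \<Rightarrow> gen" where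
  "edge n j = (j mod n, (j + 1) mod n)"

text \<open>i-th summand word of R_1: e_{i-1} e_{i-2} ... e_{i+1} (n-1 letters).\<close>
definition R1_word :: "nat \<Rightarrow> nat \<Rightarrow> word" where
  "R1_word n i = map (\<lambda>k. edge n (i + n - 1 - k)) [0..<n - 1]"

definition Rn1_word :: "nat \<Rightarrow> nat \<Rightarrow> word" where
  "Rn1_word n i = map (\<lambda>k. edge n (i + 1 + k)) [0..<n - 1]"

definition R1 :: "nat \<Rightarrow> ncpoly" where
  "R1 n = (\<lambda>v. \<Sum>i<n. monom (R1_word n i) v)"

definition Rn1 :: "nat \<Rightarrow> ncpoly" where
  "Rn1 n = (\<lambda>v. \<Sum>i<n. monom (Rn1_word n i) v)"

end

theory Submission
  imports Defs "HOL-Library.Function_Algebras"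
begin

text \<open>Both relations are instances of one statement about an arbitrary cycle
  v0 -> v1 -> ... -> v(m-1) -> v0 on distinct vertices: the sum over all edges e of the
  product of the other edges, read cyclically starting after e, vanishes in E_n.
  For a 2-cycle this is x_uv + x_vu = 0.  Subdividing the edge l -> h by a new vertex x
  turns the sum Y of the old cycle into one congruent to x_xh Y + Y x_lx: in every
  summand the factor x_lx x_xh is rewritten by the triangle relation, and the two
  resulting letters are commuted to the ends of the word past letters on disjoint
  vertices.  R_(n-1) is the sum for the cycle 0 -> 1 -> ... -> n-1 -> 0, and R_1 is its
  image under the anti-automorphism reversing words, which preserves the defining
  relations.\<close>

lemma FK_ideal_zero: "0 \<in> FK_ideal n"
  using FK_ideal.zero by (simp add: zero_fun_def)

lemma FK_ideal_add: "f \<in> FK_ideal n \<Longrightarrow> g \<in> FK_ideal n \<Longrightarrow> f + g \<in> FK_ideal n"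
  using FK_ideal.add[of f n g] by (simp add: padd_def plus_fun_def)

lemma FK_ideal_uminus: "f \<in> FK_ideal n \<Longrightarrow> - f \<in> FK_ideal n"
  using FK_ideal.smult[of f n "-1"] by (simp add: psmult_def fun_Compl_def)

lemma FK_ideal_sum:
  "finite A \<Longrightarrow> (\<And>i. i \<in> A \<Longrightarrow> f i \<in> FK_ideal n) \<Longrightarrow> sum f A \<in> FK_ideal n"
  by (induction A rule: finite_induct) (auto intro: FK_ideal_add FK_ideal_zero)

lemma FK_ideal_context:
  "r \<in> FK_ideal n \<Longrightarrow> set P \<subseteq> gens n \<Longrightarrow> set Q \<subseteq> gens n \<Longrightarrow> lmul P (rmul r Q) \<in> FK_ideal n"
  by (intro FK_ideal.lmul FK_ideal.rmul)

lemma lmul_add: "lmul u (f + g) = lmul u f + lmul u g"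
  by (auto simp: lmul_def)

lemma rmul_add: "rmul (f + g) u = rmul f u + rmul g u"
  by (auto simp: rmul_def)

lemma lmul_diff: "lmul u (f - g) = lmul u f - lmul u g"
  by (auto simp: lmul_def)

lemma rmul_diff: "rmul (f - g) u = rmul f u - rmul g u"
  by (auto simp: rmul_def)

lemma sum_fun_apply: "sum f A x = (\<Sum>i\<in>A. f i x)"
  by (induction A rule: infinite_finite_induct) auto

lemma lmul_sum: "lmul u (sum f A) = (\<Sum>i\<in>A. lmul u (f i))"
  by (auto simp: fun_eq_iff lmul_def sum_fun_apply)

lemma rmul_sum: "rmul (sum f A) u = (\<Sum>i\<in>A. rmul (f i) u)"
  by (auto simp: fun_eq_iff rmul_def sum_fun_apply)

lemma lmul_monom: "lmul u (monom w) = monom (u @ w)"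
  unfolding lmul_def monom_def by (rule ext) (metis append_eq_conv_conj)

lemma rmul_monom: "rmul (monom w) u = monom (w @ u)"
  unfolding rmul_def monom_def by (rule ext) (auto, metis append_take_drop_id)

lemma monom_context: "lmul P (rmul (monom w) Q) = monom (P @ w @ Q)"
  by (simp add: rmul_monom lmul_monom)

definition FK_cong :: "nat \<Rightarrow> ncpoly \<Rightarrow> ncpoly \<Rightarrow> bool" where
  "FK_cong n f g \<longleftrightarrow> f - g \<in> FK_ideal n"

lemma FK_cong_refl: "FK_cong n f f"
  by (simp add: FK_cong_def FK_ideal_zero)

lemma FK_cong_sym: "FK_cong n f g \<Longrightarrow> FK_cong n g f"
  unfolding FK_cong_def using FK_ideal_uminus by fastforce

lemma FK_cong_trans [trans]: "FK_cong n f g \<Longrightarrow> FK_cong n g h \<Longrightarrow> FK_cong n f h"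
  unfolding FK_cong_def using FK_ideal_add by fastforce

lemma FK_cong_add: "FK_cong n f g \<Longrightarrow> FK_cong n f' g' \<Longrightarrow> FK_cong n (f + f') (g + g')"
  unfolding FK_cong_def by (metis FK_ideal_add add_diff_add)

lemma FK_cong_uminus: "FK_cong n f g \<Longrightarrow> FK_cong n (- f) (- g)"
  unfolding FK_cong_def by (metis FK_ideal_uminus minus_diff_eq minus_diff_minus)

lemma FK_cong_diff: "FK_cong n f g \<Longrightarrow> FK_cong n f' g' \<Longrightarrow> FK_cong n (f - f') (g - g')"
  using FK_cong_add[of n f g "- f'" "- g'"] FK_cong_uminus by simp

lemma FK_cong_sum:
  "finite A \<Longrightarrow> (\<And>i. i \<in> A \<Longrightarrow> FK_cong n (f i) (g i)) \<Longrightarrow> FK_cong n (sum f A) (sum g A)"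
  unfolding FK_cong_def by (simp add: sum_subtractf[symmetric] FK_ideal_sum)

lemma FK_ideal_cong: "FK_cong n f g \<Longrightarrow> g \<in> FK_ideal n \<Longrightarrow> f \<in> FK_ideal n"
  unfolding FK_cong_def using FK_ideal_add by fastforce

lemma flip_in_FK_ideal:
  assumes "(i, j) \<in> gens n"
  shows "monom [(i, j)] + monom [(j, i)] \<in> FK_ideal n"
proof -
  have "padd (monom [(i, j)]) (monom [(j, i)]) \<in> FK_relations n"
    unfolding FK_relations_def using assms by blast
  then show ?thesis by (auto dest: FK_ideal.rel simp: padd_def plus_fun_def)
qed

lemma commute_in_FK_ideal:
  assumes "i < n" "j < n" "k < n" "l < n" "distinct [i, j, k, l]"
  shows "monom [(i, j), (k, l)] - monom [(k, l), (i, j)] \<in> FK_ideal n"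
proof -
  have "padd (monom [(i, j), (k, l)]) (psmult (-1) (monom [(k, l), (i, j)])) \<in> FK_ideal n"
    using assms by (intro FK_ideal.rel) (auto simp: FK_relations_def)
  then show ?thesis by (simp add: padd_def psmult_def fun_diff_def)
qed

lemma triangle_in_FK_ideal:
  assumes "i < n" "j < n" "k < n" "distinct [i, j, k]"
  shows "monom [(i, j), (j, k)] + monom [(j, k), (k, i)] + monom [(k, i), (i, j)] \<in> FK_ideal n"
proof -
  have "padd (padd (monom [(i, j), (j, k)]) (monom [(j, k), (k, i)])) (monom [(k, i), (i, j)])
      \<in> FK_relations n"
    unfolding FK_relations_def using assms by blast
  then show ?thesis by (auto dest: FK_ideal.rel simp: padd_def plus_fun_def)
qed

lemma FK_cong_flip:
  assumes "(i, j) \<in> gens n" "set P \<subseteq> gens n" "set Q \<subseteq> gens n"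
  shows "FK_cong n (monom (P @ [(i, j)] @ Q)) (- monom (P @ [(j, i)] @ Q))"
  using FK_ideal_context[OF flip_in_FK_ideal[OF assms(1)] assms(2,3)]
  by (simp add: FK_cong_def lmul_add rmul_add monom_context)

lemma FK_cong_commute:
  assumes "i < n" "j < n" "k < n" "l < n" "distinct [i, j, k, l]"
    and "set P \<subseteq> gens n" "set Q \<subseteq> gens n"
  shows "FK_cong n (monom (P @ [(i, j), (k, l)] @ Q)) (monom (P @ [(k, l), (i, j)] @ Q))"
  using FK_ideal_context[OF commute_in_FK_ideal[OF assms(1-5)] assms(6,7)]
  by (simp add: FK_cong_def lmul_diff rmul_diff monom_context)

lemma FK_cong_triangle:
  assumes "i < n" "j < n" "k < n" "distinct [i, j, k]"
    and "set P \<subseteq> gens n" "set Q \<subseteq> gens n"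
  shows "FK_cong n (monom (P @ [(i, j), (j, k)] @ Q))
     (- monom (P @ [(j, k), (k, i)] @ Q) - monom (P @ [(k, i), (i, j)] @ Q))"
  using FK_ideal_context[OF triangle_in_FK_ideal[OF assms(1-4)] assms(5,6)]
  by (simp add: FK_cong_def lmul_add rmul_add monom_context algebra_simps)

lemma FK_cong_commute_past:
  assumes "\<forall>y\<in>set A. distinct [fst y, snd y, fst b, snd b]" "b \<in> gens n"
    and "set P \<subseteq> gens n" "set A \<subseteq> gens n" "set Q \<subseteq> gens n"
  shows "FK_cong n (monom (P @ A @ [b] @ Q)) (monom (P @ [b] @ A @ Q))"
  using assms
proof (induction A arbitrary: P)
  case Nil
  then show ?case by (simp add: FK_cong_refl)
next
  case (Cons y A)
  have "FK_cong n (monom ((P @ [y]) @ A @ [b] @ Q)) (monom ((P @ [y]) @ [b] @ A @ Q))"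
    using Cons by (intro Cons.IH) auto
  moreover have "FK_cong n (monom (P @ [y, b] @ A @ Q)) (monom (P @ [b, y] @ A @ Q))"
    using Cons FK_cong_commute[of "fst y" n "snd y" "fst b" "snd b" P "A @ Q"]
    by (auto simp: gens_def)
  ultimately show ?case by (auto intro: FK_cong_trans)
qed

lemma FK_cong_subdivide:
  assumes "p < n" "q < n" "r < n" "distinct [p, q, r]" "set A \<subseteq> gens n" "set B \<subseteq> gens n"
    and "\<forall>y\<in>set A. distinct [fst y, snd y, q, r]" "\<forall>y\<in>set B. distinct [fst y, snd y, p, q]"
  shows "FK_cong n (monom (A @ [(p, q), (q, r)] @ B))
     (monom ((q, r) # A @ (p, r) # B) + monom (A @ (p, r) # B @ [(p, q)]))"
proof -
  have g: "(p, q) \<in> gens n" "(q, r) \<in> gens n" "(r, p) \<in> gens n" "(p, r) \<in> gens n"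
    using assms(1-4) by (auto simp: gens_def)
  have "FK_cong n (monom (A @ [(p, q), (q, r)] @ B))
      (- monom (A @ [(q, r), (r, p)] @ B) - monom (A @ [(r, p), (p, q)] @ B))"
    using assms by (intro FK_cong_triangle) auto
  also have "FK_cong n \<dots> (- (- monom (A @ [(q, r), (p, r)] @ B)) - (- monom (A @ [(p, r), (p, q)] @ B)))"
    using FK_cong_flip[of r p n "A @ [(q, r)]" B] FK_cong_flip[of r p n A "(p, q) # B"] g assms
    by (intro FK_cong_diff FK_cong_uminus) simp_all
  also have "FK_cong n \<dots> (monom ((q, r) # A @ (p, r) # B) + monom (A @ (p, r) # B @ [(p, q)]))"
    using FK_cong_commute_past[of A "(q, r)" n "[]" "(p, r) # B"]
      FK_cong_sym[OF FK_cong_commute_past[of B "(p, q)" n "A @ [(p, r)]" "[]"]] g assms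
    by (simp add: FK_cong_add)
  finally show ?thesis .
qed

subsection \<open>Word reversal\<close>

definition rev_ncpoly :: "ncpoly \<Rightarrow> ncpoly" where
  "rev_ncpoly f = (\<lambda>v. f (rev v))"

lemma rev_ncpoly_rev_ncpoly [simp]: "rev_ncpoly (rev_ncpoly f) = f"
  by (simp add: rev_ncpoly_def)

lemma rev_ncpoly_monom: "rev_ncpoly (monom w) = monom (rev w)"
  by (auto simp: rev_ncpoly_def monom_def rev_swap)

lemma rev_ncpoly_padd: "rev_ncpoly (padd f g) = padd (rev_ncpoly f) (rev_ncpoly g)"
  by (simp add: rev_ncpoly_def padd_def)

lemma rev_ncpoly_psmult: "rev_ncpoly (psmult c f) = psmult c (rev_ncpoly f)"
  by (simp add: rev_ncpoly_def psmult_def)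

lemma rev_ncpoly_lmul: "rev_ncpoly (lmul u f) = rmul (rev_ncpoly f) (rev u)"
proof
  fix v
  have "take (length u) (rev v) = u \<longleftrightarrow> length u \<le> length v \<and> drop (length v - length u) v = rev u"
  proof (cases "length u \<le> length v")
    case True
    then show ?thesis by (auto simp: take_rev rev_swap)
  next
    case False
    then show ?thesis by (auto dest: arg_cong[of _ _ length])
  qed
  then show "rev_ncpoly (lmul u f) v = rmul (rev_ncpoly f) (rev u) v"
    by (simp add: rev_ncpoly_def lmul_def rmul_def drop_rev)
qed

lemma rev_ncpoly_rmul: "rev_ncpoly (rmul f u) = lmul (rev u) (rev_ncpoly f)"
  using rev_ncpoly_lmul[of "rev u" "rev_ncpoly f"] by (metis rev_ncpoly_rev_ncpoly rev_rev_ident)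

lemma FK_cong_flip_pair:
  assumes "(i, j) \<in> gens n" "(k, l) \<in> gens n"
  shows "FK_cong n (monom [(i, j), (k, l)]) (monom [(j, i), (l, k)])"
proof -
  have "FK_cong n (monom ([] @ [(i, j)] @ [(k, l)])) (- monom ([] @ [(j, i)] @ [(k, l)]))"
    using assms by (intro FK_cong_flip) auto
  also have "FK_cong n \<dots> (- (- monom ([(j, i)] @ [(l, k)] @ [])))"
    using FK_cong_flip[of k l n "[(j, i)]" "[]"] assms
    by (intro FK_cong_uminus) (simp add: gens_def)
  finally show ?thesis by simp
qed

text \<open>The reversed triangle relation for \<open>(i, j, k)\<close> is, up to two sign flips in
  each term, the triangle relation for \<open>(k, j, i)\<close>.\<close>
lemma rev_ncpoly_relation:
  assumes "r \<in> FK_relations n"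
  shows "rev_ncpoly r \<in> FK_ideal n"
proof -
  from assms consider
      (flip) i j where "r = padd (monom [(i, j)]) (monom [(j, i)])"
    | (square) i j where "r = monom [(i, j), (i, j)]"
    | (commute) i j k l where
        "r = padd (monom [(i, j), (k, l)]) (psmult (- 1) (monom [(k, l), (i, j)]))"
    | (triangle) i j k where
        "r = padd (padd (monom [(i, j), (j, k)]) (monom [(j, k), (k, i)])) (monom [(k, i), (i, j)])"
        "i < n" "j < n" "k < n" "distinct [i, j, k]"
    unfolding FK_relations_def by blast
  then show ?thesis
  proof cases
    case flip
    then have "rev_ncpoly r = r" by (simp add: rev_ncpoly_padd rev_ncpoly_monom)
    then show ?thesis using assms by (simp add: FK_ideal.rel)
  next
    case square
    then have "rev_ncpoly r = r" by (simp add: rev_ncpoly_monom)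
    then show ?thesis using assms by (simp add: FK_ideal.rel)
  next
    case commute
    then have "rev_ncpoly r = psmult (- 1) r"
      unfolding commute rev_ncpoly_padd rev_ncpoly_psmult rev_ncpoly_monom
      by (simp add: padd_def psmult_def)
    then show ?thesis using assms by (simp add: FK_ideal.rel FK_ideal.smult)
  next
    case triangle
    have g: "(i, j) \<in> gens n" "(j, k) \<in> gens n" "(k, i) \<in> gens n"
      using triangle by (auto simp: gens_def)
    have "rev_ncpoly r = monom [(j, k), (i, j)] + monom [(k, i), (j, k)] + monom [(i, j), (k, i)]"
      unfolding triangle(1) rev_ncpoly_padd rev_ncpoly_monom by (simp add: padd_def plus_fun_def)
    moreover have "FK_cong n (monom [(j, k), (i, j)] + monom [(k, i), (j, k)] + monom [(i, j), (k, i)])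
        (monom [(k, j), (j, i)] + monom [(i, k), (k, j)] + monom [(j, i), (i, k)])"
      using g by (intro FK_cong_add FK_cong_flip_pair)
    moreover have "monom [(k, j), (j, i)] + monom [(i, k), (k, j)] + monom [(j, i), (i, k)] \<in> FK_ideal n"
      using triangle_in_FK_ideal[of k n j i] triangle by (simp add: ac_simps)
    ultimately show ?thesis by (simp add: FK_ideal_cong)
  qed
qed

lemma FK_ideal_rev_ncpoly: "f \<in> FK_ideal n \<Longrightarrow> rev_ncpoly f \<in> FK_ideal n"
proof (induction rule: FK_ideal.induct)
  case (rel r)
  then show ?case by (rule rev_ncpoly_relation)
next
  case zero
  then show ?case by (simp add: rev_ncpoly_def FK_ideal.zero)
next
  case (add f g)
  then show ?case by (simp add: rev_ncpoly_padd FK_ideal.add)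
next
  case (smult f c)
  then show ?case by (simp add: rev_ncpoly_psmult FK_ideal.smult)
next
  case (lmul f u)
  then show ?case by (simp add: rev_ncpoly_lmul FK_ideal.rmul)
next
  case (rmul f u)
  then show ?case by (simp add: rev_ncpoly_rmul FK_ideal.lmul)
qed

subsection \<open>Cyclic sums along cycles\<close>

fun path_edges :: "nat list \<Rightarrow> gen list" where
  "path_edges (a # b # vs) = (a, b) # path_edges (b # vs)"
| "path_edges _ = []"

definition cycle_edges :: "nat list \<Rightarrow> gen list" where
  "cycle_edges vs = path_edges vs @ [(last vs, hd vs)]"

definition cyclic_sum :: "gen list \<Rightarrow> ncpoly" where
  "cyclic_sum es = (\<Sum>i<length es. monom (drop (Suc i) es @ take i es))"

lemma path_edges_snoc: "vs \<noteq> [] \<Longrightarrow> path_edges (vs @ [x]) = path_edges vs @ [(last vs, x)]"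
  by (induction vs rule: path_edges.induct) auto

lemma length_path_edges: "length (path_edges vs) = length vs - 1"
  by (induction vs rule: path_edges.induct) auto

lemma path_edges_nth: "Suc j < length vs \<Longrightarrow> path_edges vs ! j = (vs ! j, vs ! Suc j)"
  by (induction vs arbitrary: j rule: path_edges.induct) (auto simp: nth_Cons' split: nat.splits)

lemma drop_path_edges: "drop k (path_edges vs) = path_edges (drop k vs)"
  by (induction vs arbitrary: k rule: path_edges.induct) (auto simp: drop_Cons' split: nat.splits)

lemma take_path_edges: "take k (path_edges vs) = path_edges (take (Suc k) vs)"
  by (induction vs arbitrary: k rule: path_edges.induct) (auto simp: take_Cons' split: nat.splits)

lemma mem_set_path_edges:
  "y \<in> set (path_edges vs) \<Longrightarrow> distinct vs \<Longrightarrow> fst y \<in> set vs \<and> snd y \<in> set vs \<and> fst y \<noteq> snd y"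
  by (induction vs rule: path_edges.induct) auto

lemma set_path_edges_subset_gens:
  "distinct vs \<Longrightarrow> set vs \<subseteq> {..<n} \<Longrightarrow> set (path_edges vs) \<subseteq> gens n"
  using mem_set_path_edges unfolding gens_def by fastforce

lemma cyclic_sum_snoc: "cyclic_sum (F @ [c]) =
   (\<Sum>i<length F. monom (drop (Suc i) F @ [c] @ take i F)) + monom F"
  unfolding cyclic_sum_def by (simp add: sum.lessThan_Suc)

lemma cyclic_sum_snoc2: "cyclic_sum (F @ [a, b]) =
   (\<Sum>i<length F. monom (drop (Suc i) F @ [a, b] @ take i F)) + monom (b # F) + monom (F @ [a])"
  unfolding cyclic_sum_def by (simp add: sum.lessThan_Suc)

lemma cyclic_sum_subdivide:
  assumes "distinct (ws @ [x])" "set (ws @ [x]) \<subseteq> {..<n}" "2 \<le> length ws"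
  shows "FK_cong n (cyclic_sum (cycle_edges (ws @ [x])))
     (lmul [(x, hd ws)] (cyclic_sum (cycle_edges ws)) + rmul (cyclic_sum (cycle_edges ws)) [(last ws, x)])"
proof -
  define F l h where "F = path_edges ws" and "l = last ws" and "h = hd ws"
  define W where "W i = drop (Suc i) F @ [(l, h)] @ take i F" for i
  have ws: "distinct ws" "x \<notin> set ws" "set ws \<subseteq> {..<n}" "x < n" "ws \<noteq> []"
    using assms by auto
  have lens: "length F = length ws - 1"
    by (simp add: F_def length_path_edges)
  obtain a t where "ws = a # t" "t \<noteq> []"
    using assms(3) by (cases ws) (auto simp: Suc_le_eq)
  then have "l \<noteq> h"
    using ws(1) unfolding l_def h_def by auto
  moreover have "l \<in> set ws" "h \<in> set ws"
    using ws(5) by (simp_all add: l_def h_def)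
  ultimately have lxh: "l < n" "x < n" "h < n" "distinct [l, x, h]"
    using ws by auto
  have F_gens: "set (drop k F) \<subseteq> gens n" "set (take k F) \<subseteq> gens n" for k
    using set_path_edges_subset_gens[OF ws(1,3)] unfolding F_def
    by (meson order_trans set_drop_subset set_take_subset)+
  have after_i: "\<forall>y\<in>set (drop (Suc i) F). distinct [fst y, snd y, x, h]" for i
  proof
    fix y assume "y \<in> set (drop (Suc i) F)"
    then have "fst y \<in> set (drop (Suc i) ws)" "snd y \<in> set (drop (Suc i) ws)" "fst y \<noteq> snd y"
      using mem_set_path_edges[of y "drop (Suc i) ws"] ws by (simp_all add: F_def drop_path_edges)
    moreover have "h \<notin> set (drop (Suc i) ws)"
      using set_take_disj_set_drop_if_distinct[OF ws(1), of 1 "Suc i"] ws(5)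
      by (auto simp: h_def hd_conv_nth take_Suc_conv_app_nth)
    ultimately show "distinct [fst y, snd y, x, h]"
      using ws lxh by (auto dest: in_set_dropD)
  qed
  have before_i: "\<forall>y\<in>set (take i F). distinct [fst y, snd y, l, x]" if "i < length F" for i
  proof
    fix y assume "y \<in> set (take i F)"
    then have "fst y \<in> set (take (Suc i) ws)" "snd y \<in> set (take (Suc i) ws)" "fst y \<noteq> snd y"
      using mem_set_path_edges[of y "take (Suc i) ws"] ws by (simp_all add: F_def take_path_edges)
    moreover have "l \<in> set (drop (Suc i) ws)"
      using that lens last_in_set[of "drop (Suc i) ws"] by (simp add: l_def)
    then have "l \<notin> set (take (Suc i) ws)"
      using set_take_disj_set_drop_if_distinct[OF ws(1), of "Suc i" "Suc i"] by auto
    ultimately show "distinct [fst y, snd y, l, x]"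
      using ws lxh by (auto dest: in_set_takeD)
  qed
  have new: "cyclic_sum (cycle_edges (ws @ [x]))
      = (\<Sum>i<length F. monom (drop (Suc i) F @ [(l, x), (x, h)] @ take i F))
        + monom ((x, h) # F) + monom (F @ [(l, x)])"
    using ws by (simp add: cycle_edges_def path_edges_snoc F_def l_def h_def cyclic_sum_snoc2)
  have old: "lmul [(x, h)] (cyclic_sum (cycle_edges ws)) + rmul (cyclic_sum (cycle_edges ws)) [(l, x)]
      = (\<Sum>i<length F. monom ((x, h) # W i) + monom (W i @ [(l, x)]))
        + monom ((x, h) # F) + monom (F @ [(l, x)])"
    unfolding W_def by (simp add: cycle_edges_def F_def l_def h_def cyclic_sum_snoc
        lmul_add rmul_add lmul_sum rmul_sum lmul_monom rmul_monom sum.distrib ac_simps)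
  have "FK_cong n (cyclic_sum (cycle_edges (ws @ [x])))
      (lmul [(x, h)] (cyclic_sum (cycle_edges ws)) + rmul (cyclic_sum (cycle_edges ws)) [(l, x)])"
    unfolding new old W_def
    using FK_cong_subdivide[of l n x h] lxh F_gens after_i before_i
    by (intro FK_cong_add FK_cong_sum FK_cong_refl) auto
  then show ?thesis by (simp only: l_def h_def)
qed

lemma cyclic_sum_cycle_edges_in_FK_ideal:
  assumes "distinct vs" "set vs \<subseteq> {..<n}" "2 \<le> length vs"
  shows "cyclic_sum (cycle_edges vs) \<in> FK_ideal n"
  using assms
proof (induction vs rule: rev_induct)
  case Nil
  then show ?case by simp
next
  case (snoc x ws)
  show ?case
  proof (cases "2 \<le> length ws")
    case True
    let ?Y = "cyclic_sum (cycle_edges ws)"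
    have "hd ws \<in> set ws" "last ws \<in> set ws"
      using True by (auto intro!: hd_in_set last_in_set)
    then have "[(x, hd ws)] \<in> lists (gens n)" "[(last ws, x)] \<in> lists (gens n)"
      using snoc.prems by (auto simp: gens_def)
    moreover have "?Y \<in> FK_ideal n"
      using snoc True by simp
    ultimately have "lmul [(x, hd ws)] ?Y + rmul ?Y [(last ws, x)] \<in> FK_ideal n"
      by (intro FK_ideal_add FK_ideal.lmul FK_ideal.rmul) auto
    then show ?thesis
      using cyclic_sum_subdivide[of ws x n] snoc.prems True by (blast intro: FK_ideal_cong)
  next
    case False
    then obtain u where u: "ws = [u]"
      using snoc.prems by (cases ws) (auto simp: Suc_le_eq)
    then have "cyclic_sum (cycle_edges (ws @ [x])) = monom [(u, x)] + monom [(x, u)]"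
      by (simp add: cyclic_sum_def cycle_edges_def numeral_2_eq_2 sum.lessThan_Suc add.commute)
    moreover have "(u, x) \<in> gens n"
      using snoc.prems u by (simp add: gens_def)
    ultimately show ?thesis
      by (metis flip_in_FK_ideal)
  qed
qed

lemma cycle_edges_upt_nth:
  assumes "j < n"
  shows "cycle_edges [0..<n] ! j = edge n j"
proof (cases "Suc j < n")
  case True
  then have "j < length (path_edges [0..<n])"
    by (simp add: length_path_edges)
  then show ?thesis
    using True by (simp add: cycle_edges_def nth_append path_edges_nth edge_def)
next
  case False
  then have "j = n - 1"
    using assms by simp
  then show ?thesis
    using assms by (simp add: cycle_edges_def nth_append length_path_edges edge_def last_upt)
qed

lemma edge_add_self: "edge n (j + n) = edge n j"
  unfolding edge_def by (simp flip: add_Suc)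

lemma Rn1_word_eq:
  assumes "i < n"
  shows "Rn1_word n i = drop (Suc i) (cycle_edges [0..<n]) @ take i (cycle_edges [0..<n])"
proof (rule nth_equalityI)
  have len: "length (cycle_edges [0..<n]) = n"
    using assms by (simp add: cycle_edges_def length_path_edges)
  then show "length (Rn1_word n i) = length (drop (Suc i) (cycle_edges [0..<n]) @ take i (cycle_edges [0..<n]))"
    using assms by (simp add: Rn1_word_def)
  fix k assume "k < length (Rn1_word n i)"
  then have k: "k < n - 1" by (simp add: Rn1_word_def)
  show "Rn1_word n i ! k = (drop (Suc i) (cycle_edges [0..<n]) @ take i (cycle_edges [0..<n])) ! k"
  proof (cases "k < n - Suc i")
    case True
    then show ?thesis using assms k len
      by (simp add: Rn1_word_def nth_append cycle_edges_upt_nth add.commute)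
  next
    case False
    have "edge n (Suc (i + k)) = edge n (Suc (i + k) - n + n)"
      using False by simp
    also have "\<dots> = edge n (Suc (i + k) - n)"
      by (rule edge_add_self)
    finally show ?thesis using assms k len False
      by (simp add: Rn1_word_def nth_append cycle_edges_upt_nth add.commute)
  qed
qed

lemma Rn1_eq_cyclic_sum:
  assumes "0 < n"
  shows "Rn1 n = cyclic_sum (cycle_edges [0..<n])"
proof -
  have "length (cycle_edges [0..<n]) = n"
    using assms by (simp add: cycle_edges_def length_path_edges)
  then show ?thesis
    by (auto simp: fun_eq_iff Rn1_def cyclic_sum_def sum_fun_apply Rn1_word_eq)
qed

lemma R1_word_eq_rev: "R1_word n i = rev (Rn1_word n i)"
proof (rule nth_equalityI)
  fix k assume "k < length (R1_word n i)"
  then have k: "k < n - 1" by (simp add: R1_word_def)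
  then have "n - 2 - k < n - 1"
    by arith
  then have "rev (Rn1_word n i) ! k = Rn1_word n i ! (n - 2 - k)"
    using k by (simp add: rev_nth Rn1_word_def numeral_2_eq_2)
  also have "\<dots> = edge n (i + 1 + (n - 2 - k))"
    using \<open>n - 2 - k < n - 1\<close> by (simp add: Rn1_word_def)
  also have "i + 1 + (n - 2 - k) = i + n - 1 - k"
    using k by arith
  finally show "R1_word n i ! k = rev (Rn1_word n i) ! k"
    using k by (simp add: R1_word_def)
qed (simp add: R1_word_def Rn1_word_def)

lemma R1_eq_rev_ncpoly_Rn1: "R1 n = rev_ncpoly (Rn1 n)"
  by (simp add: fun_eq_iff R1_def Rn1_def rev_ncpoly_def R1_word_eq_rev monom_def rev_swap)

theorem mainTheorem20:
  fixes n :: nat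
  assumes "n \<ge> 3"
  shows "FK_zero n (R1 n) \<and> FK_zero n (Rn1 n)"
proof -
  have "Rn1 n = cyclic_sum (cycle_edges [0..<n])"
    using assms by (intro Rn1_eq_cyclic_sum) simp
  moreover have "cyclic_sum (cycle_edges [0..<n]) \<in> FK_ideal n"
    using assms by (intro cyclic_sum_cycle_edges_in_FK_ideal) auto
  ultimately have Rn1: "Rn1 n \<in> FK_ideal n"
    by simp
  then have "R1 n \<in> FK_ideal n"
    unfolding R1_eq_rev_ncpoly_Rn1 by (rule FK_ideal_rev_ncpoly)
  with Rn1 show ?thesis
    by (simp add: FK_zero_def)
qed

end
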